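(* Let $\mathbf X=(X_1,\dots,X_d)$ be a centered Gaussian random vector with non-singular covariance matrix $\Sigma$, let $\mathbf c\in\mathbb R^d$ have at least one positive component, and let $I$ be the index set associated with $\Pi_\Sigma(\mathbf c)$. If $1\in I$, then with $M(\mathbf c,u)=\mathbb E[X_1\mid\mathbf X>\mathbf cu]$, $$\lim_{u\to\infty}u\,[M(\mathbf c,u)-c_1u]=\frac{1}{\mathbf c_I^\top(\Sigma_{II})^{-1}\mathbf e_1}>0.$$
   Context: Vector inequalities are componentwise; $\Sigma_{II}$ and $\mathbf c_I$ denote the submatrix and subvector with indices in $I$. $\Pi_\Sigma(\mathbf c)$ is the problem of minimising $\mathbf x^\top\Sigma^{-1}\mathbf x$ over $\mathbf x\ge\mathbf c$; it has a unique solution $\tilde{\mathbf c}$ and $I$ is the unique non-empty index set with $\tilde{\mathbf c}_I=\mathbf c_I$, $(\Sigma_{II})^{-1}\mathbf c_I>\mathbf 0$ and $\tilde{\mathbf c}_{I^c}=\Sigma_{I^cI}(\Sigma_{II})^{-1}\mathbf c_I\ge\mathbf c_{I^c}$. $\mathbf e_1\in\mathbb R^{|I|}$ is the unit vector with $1$ in the position of index $1$ within $I$. *)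

theory Defs
  imports "HOL-Probability.Probability"
begin

definition gauss_density :: "real^'d^'d \<Rightarrow> real^'d \<Rightarrow> ennreal" where
  "gauss_density S x =
     ennreal (exp (- (x \<bullet> (matrix_inv S *v x)) / 2) / sqrt ((2 * pi) ^ CARD('d) * det S))"

text \<open>Inverse of the principal submatrix S_II, embedded into a 'd x 'd matrix
  (entries outside I x I are zero).\<close>
definition sub_inv :: "real^'d^'d \<Rightarrow> 'd set \<Rightarrow> real^'d^'d" where
  "sub_inv S I = (THE B.
      (\<forall>i j. (i \<notin> I \<or> j \<notin> I) \<longrightarrow> B $ i $ j = 0) \<and>
      (\<forall>i\<in>I. \<forall>j\<in>I. (\<Sum>k\<in>I. S $ i $ k * B $ k $ j) = (if i = j then 1 else 0)))"

definition Pi_solution :: "real^'d^'d \<Rightarrow> real^'d \<Rightarrow> real^'d \<Rightarrow> bool" where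
  "Pi_solution S c ct \<longleftrightarrow> (\<forall>i. c $ i \<le> ct $ i) \<and>
     (\<forall>x. (\<forall>i. c $ i \<le> x $ i) \<longrightarrow> ct \<bullet> (matrix_inv S *v ct) \<le> x \<bullet> (matrix_inv S *v x))"

definition assoc_index_set :: "real^'d^'d \<Rightarrow> real^'d \<Rightarrow> 'd set \<Rightarrow> bool" where
  "assoc_index_set S c I \<longleftrightarrow> I \<noteq> {} \<and>
     (\<exists>ct. Pi_solution S c ct \<and>
        (\<forall>i\<in>I. ct $ i = c $ i) \<and>
        (\<forall>i\<in>I. (\<Sum>j\<in>I. sub_inv S I $ i $ j * c $ j) > 0) \<and>
        (\<forall>j. j \<notin> I \<longrightarrow>
            ct $ j = (\<Sum>i\<in>I. S $ j $ i * (\<Sum>l\<in>I. sub_inv S I $ i $ l * c $ l)) \<and>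
            ct $ j \<ge> c $ j))"

definition cond_mean :: "'a measure \<Rightarrow> ('a \<Rightarrow> real^'d) \<Rightarrow> 'd \<Rightarrow> real^'d \<Rightarrow> real \<Rightarrow> real" where
  "cond_mean M X k c u =
     (let A = {\<omega> \<in> space M. \<forall>i. X \<omega> $ i > c $ i * u}
      in (\<integral>\<omega>. X \<omega> $ k * indicator A \<omega> \<partial>M) / measure M A)"

end

theory Submission
  imports Defs
begin

text \<open>Put \<open>\<lambda> = \<Sigma>\<^sup>-\<^sup>1 c\<^sup>~\<close>; it equals \<open>(\<Sigma>\<^sub>I\<^sub>I)\<^sup>-\<^sup>1 c\<^sub>I\<close> on \<open>I\<close> and vanishes off \<open>I\<close>. The substitution
  \<open>x = u c\<^sup>~ + D\<^sub>u y\<close>, where \<open>D\<^sub>u\<close> divides the coordinates in \<open>I\<close> by \<open>u\<close>, turns the Gaussian density on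
  \<open>{x > c u}\<close> into a constant multiple of \<open>exp (- \<lambda>\<^sup>\<top>y - (D\<^sub>u y)\<^sup>\<top>\<Sigma>\<^sup>-\<^sup>1(D\<^sub>u y)/2)\<close> on
  \<open>{y\<^sub>I > 0, y\<^sub>j > -(c\<^sup>~\<^sub>j - c\<^sub>j) u}\<close>, and \<open>u (M(c,u) - c\<^sub>1 u)\<close> becomes the ratio of the first
  \<open>y\<^sub>1\<close>-moment of this kernel to its mass. As \<open>u \<rightarrow> \<infinity>\<close> the kernel converges, under a dominating
  product of one-dimensional exponentials, to a limit in which \<open>y\<^sub>1\<close> only enters through the factor
  \<open>exp (-\<lambda>\<^sub>1 y\<^sub>1) [y\<^sub>1 > 0]\<close>, so the ratio tends to \<open>1/\<lambda>\<^sub>1\<close>.\<close>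

section \<open>Positive definite matrices\<close>

lemma matrix_mul_inv:
  fixes A :: "real^'n^'n"
  assumes "invertible A"
  shows "A ** matrix_inv A = mat 1" and "matrix_inv A ** A = mat 1"
proof -
  have "\<exists>A'. A ** A' = mat 1 \<and> A' ** A = mat 1"
    using assms unfolding invertible_def by blast
  from someI_ex[OF this] show "A ** matrix_inv A = mat 1" "matrix_inv A ** A = mat 1"
    unfolding matrix_inv_def by auto
qed

lemma matrix_vector_mul_inv:
  fixes A :: "real^'n^'n"
  assumes "invertible A"
  shows "A *v (matrix_inv A *v v) = v" and "matrix_inv A *v (A *v v) = v"
  using matrix_mul_inv[OF assms] by (simp_all add: matrix_vector_mul_assoc)

lemma transpose_matrix_inv_symmetric:
  fixes A :: "real^'n^'n"
  assumes "invertible A" and "transpose A = A"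
  shows "transpose (matrix_inv A) = matrix_inv A"
proof -
  let ?B = "matrix_inv A"
  have "transpose ?B ** A = mat 1"
    using arg_cong[OF matrix_mul_inv(1)[OF assms(1)], of transpose] assms(2)
    by (simp add: matrix_transpose_mul transpose_mat)
  then have "transpose ?B = transpose ?B ** (A ** ?B)"
    using matrix_mul_inv[OF assms(1)] by (simp add: matrix_mul_rid)
  also have "\<dots> = ?B"
    using \<open>transpose ?B ** A = mat 1\<close> by (simp add: matrix_mul_assoc matrix_mul_lid)
  finally show ?thesis .
qed

lemma symmetric_matrix_nth:
  fixes A :: "real^'n^'n"
  assumes "transpose A = A"
  shows "A $ i $ j = A $ j $ i"
  using arg_cong[OF assms, of "\<lambda>B. B $ j $ i"] by (simp add: transpose_def)

lemma inner_symmetric_matrix_commute: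
  fixes A :: "real^'n^'n"
  assumes "transpose A = A"
  shows "x \<bullet> (A *v y) = y \<bullet> (A *v x)"
  by (metis assms dot_lmul_matrix inner_commute vector_transpose_matrix)

lemma psd_form_eq_0_imp_mult_eq_0:
  fixes A :: "real^'n^'n"
  assumes sym: "transpose A = A" and psd: "\<forall>x. 0 \<le> x \<bullet> (A *v x)"
    and "v \<bullet> (A *v v) = 0"
  shows "A *v v = 0"
proof (rule ccontr)
  let ?w = "A *v v"
  assume "?w \<noteq> 0"
  then have wpos: "?w \<bullet> ?w > 0" by simp
  have wAw: "?w \<bullet> (A *v ?w) \<ge> 0" using psd by blast
  \<comment> \<open>the form is negative at \<open>v - t w\<close> for small \<open>t > 0\<close>\<close>
  define t where "t = (?w \<bullet> ?w) / (?w \<bullet> (A *v ?w) + 1)"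
  have tpos: "t > 0" unfolding t_def using wpos wAw by auto
  have "(v - t *\<^sub>R ?w) \<bullet> (A *v (v - t *\<^sub>R ?w)) = - 2 * t * (?w \<bullet> ?w) + t * (t * (?w \<bullet> (A *v ?w)))"
    using inner_symmetric_matrix_commute[OF sym, of v ?w] assms(3)
    by (simp add: matrix_vector_mult_diff_distrib matrix_vector_mult_scaleR inner_diff_left
        inner_diff_right algebra_simps power2_eq_square)
  also have "t * (?w \<bullet> (A *v ?w)) \<le> ?w \<bullet> ?w"
    unfolding t_def using wpos wAw by (simp add: field_simps)
  then have "- 2 * t * (?w \<bullet> ?w) + t * (t * (?w \<bullet> (A *v ?w))) \<le> - t * (?w \<bullet> ?w)"
    using tpos by (simp add: mult_left_mono)
  also have "\<dots> < 0" using tpos wpos by simp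
  finally show False using psd by (meson not_le)
qed

lemma pd_form_pos:
  fixes A :: "real^'n^'n"
  assumes sym: "transpose A = A" and psd: "\<forall>x. 0 \<le> x \<bullet> (A *v x)"
    and inv: "invertible A" and "v \<noteq> 0"
  shows "v \<bullet> (A *v v) > 0"
proof -
  have "v \<bullet> (A *v v) \<noteq> 0"
  proof
    assume "v \<bullet> (A *v v) = 0"
    then have "A *v v = 0" using psd_form_eq_0_imp_mult_eq_0[OF sym psd] by blast
    then have "v = 0" using matrix_vector_mul_inv(2)[OF inv, of v] by simp
    with assms(4) show False ..
  qed
  with psd[rule_format, of v] show ?thesis by linarith
qed

lemma pd_form_coercive:
  fixes A :: "real^'n^'n"
  assumes sym: "transpose A = A" and psd: "\<forall>x. 0 \<le> x \<bullet> (A *v x)" and inv: "invertible A"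
  obtains m where "m > 0" and "\<And>v. m * (v \<bullet> v) \<le> v \<bullet> (A *v v)"
proof -
  define f where "f v = v \<bullet> (A *v v)" for v :: "real^'n"
  have "axis undefined 1 \<in> sphere (0::real^'n) 1" by (simp add: dist_norm)
  moreover have "continuous_on (sphere 0 1) f" unfolding f_def by (intro continuous_intros)
  ultimately obtain x0 where x0: "x0 \<in> sphere 0 1" and min: "\<And>y. y \<in> sphere 0 1 \<Longrightarrow> f x0 \<le> f y"
    using continuous_attains_inf[OF compact_sphere] by blast
  have "x0 \<noteq> 0" using x0 by auto
  then have "f x0 > 0" unfolding f_def by (rule pd_form_pos[OF sym psd inv])
  moreover have "f x0 * (v \<bullet> v) \<le> v \<bullet> (A *v v)" for v
  proof (cases "v = 0")
    case False
    have "(1 / norm v) *\<^sub>R v \<in> sphere 0 1" using False by (simp add: dist_norm)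
    then have "f x0 \<le> (1 / norm v)^2 * (v \<bullet> (A *v v))"
      using min by (fastforce simp: f_def matrix_vector_mult_scaleR power2_eq_square)
    then show ?thesis using False by (simp add: field_simps power2_norm_eq_inner)
  qed simp
  ultimately show thesis by (rule that)
qed

lemma matrix_inv_pd:
  fixes S :: "real^'n^'n"
  assumes sym: "transpose S = S" and psd: "\<forall>x. 0 \<le> x \<bullet> (S *v x)" and inv: "invertible S"
  shows "transpose (matrix_inv S) = matrix_inv S"
    and "\<forall>x. 0 \<le> x \<bullet> (matrix_inv S *v x)"
    and "invertible (matrix_inv S)"
proof -
  show "transpose (matrix_inv S) = matrix_inv S" by (rule transpose_matrix_inv_symmetric[OF inv sym])
  show "\<forall>x. 0 \<le> x \<bullet> (matrix_inv S *v x)"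
  proof
    fix x
    have "x \<bullet> (matrix_inv S *v x) = (matrix_inv S *v x) \<bullet> (S *v (matrix_inv S *v x))"
      by (simp add: matrix_vector_mul_inv[OF inv] inner_commute)
    then show "0 \<le> x \<bullet> (matrix_inv S *v x)" using psd by simp
  qed
  show "invertible (matrix_inv S)"
    unfolding invertible_def using matrix_mul_inv[OF inv] by blast
qed

section \<open>Principal submatrices and the multipliers of \<open>\<Pi>\<^sub>\<Sigma>(c)\<close>\<close>

definition principal_inverse :: "real^'d^'d \<Rightarrow> 'd set \<Rightarrow> real^'d^'d \<Rightarrow> bool" where
  "principal_inverse S I B \<longleftrightarrow>
     (\<forall>i j. (i \<notin> I \<or> j \<notin> I) \<longrightarrow> B $ i $ j = 0) \<and>
     (\<forall>i\<in>I. \<forall>j\<in>I. (\<Sum>k\<in>I. S $ i $ k * B $ k $ j) = (if i = j then 1 else 0))"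

lemma pd_principal_kernel:
  fixes S :: "real^'n^'n"
  assumes sym: "transpose S = S" and psd: "\<forall>x. 0 \<le> x \<bullet> (S *v x)" and inv: "invertible S"
    and supp: "\<And>i. i \<notin> I \<Longrightarrow> v $ i = 0" and ker: "\<And>i. i \<in> I \<Longrightarrow> (S *v v) $ i = 0"
  shows "v = 0"
proof (rule ccontr)
  assume "v \<noteq> 0"
  then have "v \<bullet> (S *v v) > 0" by (rule pd_form_pos[OF sym psd inv])
  moreover have "v \<bullet> (S *v v) = 0"
    unfolding inner_vec_def by (intro sum.neutral) (metis inner_real_def mult_zero_left mult_zero_right supp ker)
  ultimately show False by simp
qed

lemma principal_inverse_unique:
  fixes S :: "real^'n^'n"
  assumes sym: "transpose S = S" and psd: "\<forall>x. 0 \<le> x \<bullet> (S *v x)" and inv: "invertible S"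
    and B: "principal_inverse S I B" and B': "principal_inverse S I B'"
  shows "B = B'"
proof -
  have "column j B = column j B'" for j
  proof (cases "j \<in> I")
    case False
    then show ?thesis using B B' by (simp add: principal_inverse_def column_def)
  next
    case True
    define d where "d = column j B - column j B'"
    have "(S *v d) $ i = 0" if "i \<in> I" for i
    proof -
      have "(S *v d) $ i = (\<Sum>k\<in>I. S$i$k * d$k)"
        unfolding matrix_vector_mult_def using B B'
        by (auto simp: d_def column_def principal_inverse_def intro: sum.mono_neutral_right)
      also have "\<dots> = (\<Sum>k\<in>I. S$i$k * B$k$j) - (\<Sum>k\<in>I. S$i$k * B'$k$j)"
        by (simp add: d_def column_def right_diff_distrib sum_subtractf)
      also have "\<dots> = 0" using B B' that True by (simp add: principal_inverse_def)
      finally show ?thesis .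
    qed
    moreover have "d $ i = 0" if "i \<notin> I" for i
      using B B' that by (simp add: d_def column_def principal_inverse_def)
    ultimately have "d = 0" using pd_principal_kernel[OF sym psd inv] by blast
    then show ?thesis by (simp add: d_def)
  qed
  then show ?thesis by (simp add: vec_eq_iff column_def)
qed

lemma invertible_principal_completion:
  fixes S :: "real^'n^'n"
  assumes sym: "transpose S = S" and psd: "\<forall>x. 0 \<le> x \<bullet> (S *v x)" and inv: "invertible S"
  shows "invertible (\<chi> i j. if i \<in> I \<and> j \<in> I then S$i$j else if i = j then 1 else (0::real))"
    (is "invertible ?S'")
proof -
  have "v = 0" if S'v: "?S' *v v = 0" for v
  proof -
    have S'v_nth: "(\<Sum>j\<in>UNIV. ?S'$i$j * v$j) = 0" for i
      using S'v by (simp add: matrix_vector_mult_def vec_eq_iff)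
    have off: "v$i = 0" if "i \<notin> I" for i
    proof -
      have "(\<Sum>j\<in>UNIV. ?S'$i$j * v$j) = (\<Sum>j\<in>UNIV. if j = i then v$j else 0)"
        using that by (intro sum.cong) auto
      then show ?thesis using S'v_nth[of i] by simp
    qed
    have "(S *v v)$i = 0" if "i \<in> I" for i
    proof -
      have "(S *v v)$i = (\<Sum>j\<in>UNIV. ?S'$i$j * v$j)"
        unfolding matrix_vector_mult_def using that off by (auto intro: sum.cong)
      then show ?thesis using S'v_nth[of i] by simp
    qed
    then show "v = 0" using off pd_principal_kernel[OF sym psd inv] by blast
  qed
  then show ?thesis using invertible_left_inverse matrix_left_invertible_ker by blast
qed

lemma principal_inverse_exists:
  fixes S :: "real^'n^'n"
  assumes sym: "transpose S = S" and psd: "\<forall>x. 0 \<le> x \<bullet> (S *v x)" and inv: "invertible S"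
  obtains B where "principal_inverse S I B" and "transpose B = B"
proof -
  define S' :: "real^'n^'n" where
    "S' = (\<chi> i j. if i \<in> I \<and> j \<in> I then S$i$j else if i = j then 1 else 0)"
  have S'inv: "invertible S'"
    unfolding S'_def by (rule invertible_principal_completion[OF sym psd inv])
  have S'sym: "transpose S' = S'"
    by (simp add: S'_def transpose_def vec_eq_iff symmetric_matrix_nth[OF sym])
  define B' where "B' = matrix_inv S'"
  have B'sym: "B'$i$j = B'$j$i" for i j
    using symmetric_matrix_nth[OF transpose_matrix_inv_symmetric[OF S'inv S'sym]] by (simp add: B'_def)
  define B :: "real^'n^'n" where "B = (\<chi> i j. if i \<in> I \<and> j \<in> I then B'$i$j else 0)"
  have "principal_inverse S I B"
    unfolding principal_inverse_def
  proof (intro conjI allI ballI impI)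
    fix i j assume "i \<notin> I \<or> j \<notin> I" then show "B$i$j = 0" by (auto simp: B_def)
  next
    fix i j assume ij: "i \<in> I" "j \<in> I"
    have "(\<Sum>k\<in>I. S $ i $ k * B $ k $ j) = (\<Sum>k\<in>UNIV. S' $ i $ k * B' $ k $ j)"
      using ij by (auto simp: B_def S'_def intro: sum.mono_neutral_cong_left)
    also have "\<dots> = (S' ** B') $ i $ j" by (simp add: matrix_matrix_mult_def)
    also have "\<dots> = mat 1 $ i $ j" by (simp add: B'_def matrix_mul_inv(1)[OF S'inv])
    finally show "(\<Sum>k\<in>I. S $ i $ k * B $ k $ j) = (if i = j then 1 else 0)"
      by (simp add: mat_def)
  qed
  moreover have "transpose B = B"
    by (simp add: B_def transpose_def vec_eq_iff B'sym conj_commute)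
  ultimately show thesis by (rule that)
qed

lemma sub_inv_principal_inverse:
  fixes S :: "real^'n^'n"
  assumes sym: "transpose S = S" and psd: "\<forall>x. 0 \<le> x \<bullet> (S *v x)" and inv: "invertible S"
  shows "principal_inverse S I (sub_inv S I)" and "transpose (sub_inv S I) = sub_inv S I"
proof -
  obtain B where B: "principal_inverse S I B" and Bsym: "transpose B = B"
    using principal_inverse_exists[OF sym psd inv] .
  have "sub_inv S I = B"
    unfolding sub_inv_def principal_inverse_def[symmetric]
    using B principal_inverse_unique[OF sym psd inv] by blast
  then show "principal_inverse S I (sub_inv S I)" "transpose (sub_inv S I) = sub_inv S I"
    using B Bsym by simp_all
qed

text \<open>Up to a factor 2, the Lagrange multipliers of \<open>\<Pi>\<^sub>\<Sigma>(c)\<close>.\<close>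

definition lagrange_vec :: "real^'d^'d \<Rightarrow> 'd set \<Rightarrow> real^'d \<Rightarrow> real^'d" where
  "lagrange_vec S I c = (\<chi> i. if i \<in> I then \<Sum>l\<in>I. sub_inv S I $ i $ l * c $ l else 0)"

lemma sum_mult_sub_inv_eq_lagrange_vec:
  fixes S :: "real^'n^'n"
  assumes sym: "transpose S = S" and psd: "\<forall>x. 0 \<le> x \<bullet> (S *v x)" and inv: "invertible S"
    and "k \<in> I"
  shows "(\<Sum>i\<in>I. c $ i * sub_inv S I $ i $ k) = lagrange_vec S I c $ k"
  using assms(4) symmetric_matrix_nth[OF sub_inv_principal_inverse(2)[OF sym psd inv]]
  by (simp add: lagrange_vec_def mult.commute)

lemma assoc_index_set_lagrange_vec:
  fixes S :: "real^'n^'n"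
  assumes sym: "transpose S = S" and psd: "\<forall>x. 0 \<le> x \<bullet> (S *v x)" and inv: "invertible S"
    and "assoc_index_set S c I"
  obtains ct where "\<And>i. i \<in> I \<Longrightarrow> ct $ i = c $ i" and "\<And>j. j \<notin> I \<Longrightarrow> c $ j \<le> ct $ j"
    and "matrix_inv S *v ct = lagrange_vec S I c"
    and "\<And>i. i \<in> I \<Longrightarrow> lagrange_vec S I c $ i > 0"
proof -
  let ?l = "lagrange_vec S I c"
  obtain ct where ctI: "\<forall>i\<in>I. ct $ i = c $ i"
    and pos: "\<forall>i\<in>I. (\<Sum>j\<in>I. sub_inv S I $ i $ j * c $ j) > 0"
    and ctO: "\<forall>j. j \<notin> I \<longrightarrow>
            ct $ j = (\<Sum>i\<in>I. S $ j $ i * (\<Sum>l\<in>I. sub_inv S I $ i $ l * c $ l)) \<and> c $ j \<le> ct $ j"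
    using assms(4) unfolding assoc_index_set_def by blast
  have B: "(\<Sum>k\<in>I. S$i$k * sub_inv S I $k$j) = (if i = j then 1 else 0)" if "i \<in> I" "j \<in> I" for i j
    using sub_inv_principal_inverse(1)[OF sym psd inv, of I] that by (simp add: principal_inverse_def)
  have "(S *v ?l) $ j = ct $ j" for j
  proof -
    have "(S *v ?l) $ j = (\<Sum>i\<in>I. S$j$i * (\<Sum>l\<in>I. sub_inv S I $ i $ l * c $ l))"
      unfolding matrix_vector_mult_def
      by (simp, rule sum.mono_neutral_cong_right) (auto simp: lagrange_vec_def)
    also have "\<dots> = ct $ j"
    proof (cases "j \<in> I")
      case True
      have "(\<Sum>i\<in>I. S$j$i * (\<Sum>l\<in>I. sub_inv S I $ i $ l * c $ l)) =
            (\<Sum>l\<in>I. (\<Sum>i\<in>I. S$j$i * sub_inv S I $ i $ l) * c $ l)"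
        by (simp add: sum_distrib_left sum_distrib_right mult.assoc) (rule sum.swap)
      also have "\<dots> = c $ j"
        using True by (simp add: B if_distrib[of "\<lambda>x. x * _"] cong: if_cong)
      finally show ?thesis using ctI True by simp
    qed (use ctO in simp)
    finally show ?thesis .
  qed
  then have "S *v ?l = ct" by (simp add: vec_eq_iff)
  then have "matrix_inv S *v ct = ?l"
    using matrix_vector_mul_inv(2)[OF inv, of ?l] by simp
  moreover have "\<And>i. i \<in> I \<Longrightarrow> ?l $ i > 0" using pos by (simp add: lagrange_vec_def)
  ultimately show thesis using that ctI ctO by blast
qed

section \<open>Integrals over \<open>real^'n\<close>\<close>

lemma borel_measurable_vec_lambda [measurable (raw)]:
  fixes f :: "'a \<Rightarrow> 'n::finite \<Rightarrow> real"
  assumes "\<And>i. (\<lambda>x. f x i) \<in> borel_measurable M"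
  shows "(\<lambda>x. \<chi> i. f x i) \<in> borel_measurable M"
proof -
  have "(\<lambda>x. \<chi> i. f x i) = (\<lambda>x. \<Sum>i\<in>UNIV. f x i *\<^sub>R axis i 1)"
    by (auto simp: vec_eq_iff axis_def if_distrib cong: if_cong)
  then show ?thesis using assms by simp
qed

lemma borel_measurable_quadratic_form [measurable]:
  "(\<lambda>x::real^'n::finite. x \<bullet> (A *v x)) \<in> borel_measurable borel"
  by (intro borel_measurable_continuous_onI continuous_intros)

lemma Basis_vec_eq_range_axis: "(Basis :: (real^'n::finite) set) = range (\<lambda>i. axis i 1)"
  using axis_inverse by (auto simp: Basis_vec_def)

lemma inj_axis_1: "inj (\<lambda>i::'n::finite. axis i (1::real))"
  by (auto simp: inj_on_def axis_eq_axis)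

lemma sum_Basis_vec_nth:
  fixes g :: "real^'n::finite \<Rightarrow> real"
  assumes "B \<subseteq> Basis"
  shows "(\<Sum>b\<in>B. g b *\<^sub>R b) $ i = (if axis i 1 \<in> B then g (axis i 1) else 0)"
proof -
  have "(\<Sum>b\<in>B. g b *\<^sub>R b) $ i = (\<Sum>b\<in>B. if b = axis i 1 then g b else 0)"
  proof (simp, intro sum.cong refl)
    fix b assume "b \<in> B"
    then obtain j where "b = axis j 1" using assms axis_inverse by blast
    moreover have "b $ i = (if j = i then 1 else 0)" using \<open>b = axis j 1\<close> by (simp add: axis_def)
    ultimately show "g b * b $ i = (if b = axis i 1 then g b else 0)"
      by (auto simp: axis_eq_axis)
  qed
  also have "\<dots> = (if axis i 1 \<in> B then g (axis i 1) else 0)"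
    using finite_subset[OF assms] by (simp add: sum.delta')
  finally show ?thesis .
qed

lemma nn_integral_lborel_vec_prod:
  fixes \<phi> :: "'n::finite \<Rightarrow> real \<Rightarrow> ennreal"
  assumes [measurable]: "\<And>i. \<phi> i \<in> borel_measurable borel"
  shows "(\<integral>\<^sup>+x. (\<Prod>i\<in>UNIV. \<phi> i (x$i)) \<partial>(lborel :: (real^'n) measure)) =
    (\<Prod>i\<in>UNIV. \<integral>\<^sup>+t. \<phi> i t \<partial>lborel)"
proof -
  define f where "f b = \<phi> (axis_index (b::real^'n))" for b
  have "(\<integral>\<^sup>+x. (\<Prod>b\<in>Basis. f b (x \<bullet> b)) \<partial>(lborel :: (real^'n) measure)) =
      (\<Prod>b\<in>Basis. (\<integral>\<^sup>+x. f b x \<partial>lborel))"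
    by (rule nn_integral_lborel_prod) (auto simp: f_def)
  then show ?thesis
    unfolding Basis_vec_eq_range_axis by (simp add: prod.reindex[OF inj_axis_1] f_def inner_axis)
qed

lemma nn_integral_lborel_split_coordinate:
  fixes k :: "'n::finite" and R :: "real^'n \<Rightarrow> ennreal"
  assumes [measurable]: "R \<in> borel_measurable borel"
  obtains K where "\<And>\<phi>. \<phi> \<in> borel_measurable borel \<Longrightarrow>
    (\<integral>\<^sup>+y. \<phi> (y$k) * R (\<chi> i. if i = k then 0 else y$i) \<partial>(lborel :: (real^'n) measure)) =
      (\<integral>\<^sup>+t. \<phi> t \<partial>lborel) * K"
proof -
  define e :: "real^'n" where "e = axis k 1"
  define J where "J = (Basis :: (real^'n) set) - {e}"
  have BJ: "Basis = insert e J" by (auto simp: J_def e_def)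
  have fJ: "finite J" "e \<notin> J" "J \<subseteq> Basis" by (auto simp: J_def)
  interpret product_sigma_finite "\<lambda>_. lborel" by standard
  have "(\<integral>\<^sup>+y. \<phi> (y$k) * R (\<chi> i. if i = k then 0 else y$i) \<partial>lborel) =
      (\<integral>\<^sup>+t. \<phi> t \<partial>lborel) * (\<integral>\<^sup>+f. R (\<Sum>b\<in>J. f b *\<^sub>R b) \<partial>(PiM J (\<lambda>_. lborel)))"
    if [measurable]: "\<phi> \<in> borel_measurable borel" for \<phi>
  proof -
    define G where "G y = \<phi> (y$k) * R (\<chi> i. if i = k then 0 else y$i)" for y :: "real^'n"
    have [measurable]: "G \<in> borel_measurable borel" unfolding G_def by measurable
    have "(\<integral>\<^sup>+y. G y \<partial>lborel) = (\<integral>\<^sup>+f. G (\<Sum>b\<in>Basis. f b *\<^sub>R b) \<partial>(PiM Basis (\<lambda>_. lborel)))"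
      by (subst lborel_eq[where 'a="real^'n"]) (simp add: nn_integral_distr)
    also have "\<dots> = (\<integral>\<^sup>+f. \<integral>\<^sup>+t. G (\<Sum>b\<in>Basis. (f(e:=t)) b *\<^sub>R b) \<partial>lborel \<partial>(PiM J (\<lambda>_. lborel)))"
      unfolding BJ by (rule product_nn_integral_insert[OF fJ(1,2)]) (simp add: BJ[symmetric])
    also have "\<dots> = (\<integral>\<^sup>+f. \<integral>\<^sup>+t. \<phi> t * R (\<Sum>b\<in>J. f b *\<^sub>R b) \<partial>lborel \<partial>(PiM J (\<lambda>_. lborel)))"
    proof (intro nn_integral_cong)
      fix f :: "real^'n \<Rightarrow> real" and t :: real
      have "(\<Sum>b\<in>Basis. (f(e:=t)) b *\<^sub>R b) = t *\<^sub>R e + (\<Sum>b\<in>J. f b *\<^sub>R b)"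
        unfolding BJ using fJ by (simp add: sum.insert) (intro sum.cong refl, auto)
      moreover have "(\<Sum>b\<in>J. f b *\<^sub>R b) $ i = (if i = k then 0 else f (axis i 1))" for i
        using sum_Basis_vec_nth[OF fJ(3), of f i] by (auto simp: J_def e_def axis_eq_axis)
      ultimately show "G (\<Sum>b\<in>Basis. (f(e:=t)) b *\<^sub>R b) = \<phi> t * R (\<Sum>b\<in>J. f b *\<^sub>R b)"
        unfolding G_def
        by (auto simp: e_def axis_def vec_eq_iff intro!: arg_cong[where f=R] arg_cong2[where f="(*)"])
    qed
    also have "\<dots> = (\<integral>\<^sup>+f. (\<integral>\<^sup>+t. \<phi> t \<partial>lborel) * R (\<Sum>b\<in>J. f b *\<^sub>R b) \<partial>(PiM J (\<lambda>_. lborel)))"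
      by (intro nn_integral_cong) (simp add: nn_integral_multc)
    also have "\<dots> = (\<integral>\<^sup>+t. \<phi> t \<partial>lborel) * (\<integral>\<^sup>+f. R (\<Sum>b\<in>J. f b *\<^sub>R b) \<partial>(PiM J (\<lambda>_. lborel)))"
      by (rule nn_integral_cmult) measurable
    finally show ?thesis unfolding G_def .
  qed
  then show thesis by (rule that)
qed

lemma nn_integral_power_exp_Ici:
  fixes l :: real
  assumes l: "l > 0"
  shows "(\<integral>\<^sup>+t. ennreal (t^n * exp (-(l*t))) * indicator {0..} t \<partial>lborel) = ennreal (fact n / l^(n+1))"
proof -
  have "ennreal (fact n) = (\<integral>\<^sup>+x. ennreal (x^n * exp (-x)) * indicator {0 ..} x \<partial>lborel)"
    using nn_intergal_power_times_exp_Ici[of n] by simp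
  also have "\<dots> = ennreal l * (\<integral>\<^sup>+t. ennreal ((l*t)^n * exp (-(l*t))) * indicator {0..} (l*t) \<partial>lborel)"
    using nn_integral_real_affine[of "\<lambda>x. ennreal (x^n * exp (-x)) * indicator {0 ..} x" l 0] l
    by simp
  also have "(\<lambda>t. ennreal ((l*t)^n * exp (-(l*t))) * indicator {0..} (l*t)) =
      (\<lambda>t. ennreal (l^n) * (ennreal (t^n * exp (-(l*t))) * indicator {0..} t))"
    using l by (auto simp: ennreal_mult'[symmetric] power_mult_distrib zero_le_mult_iff mult_ac
        indicator_def not_le)
  also have "(\<integral>\<^sup>+t. ennreal (l^n) * (ennreal (t^n * exp (-(l*t))) * indicator {0..} t) \<partial>lborel) =
     ennreal (l^n) * (\<integral>\<^sup>+t. ennreal (t^n * exp (-(l*t))) * indicator {0..} t \<partial>lborel)"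
    by (rule nn_integral_cmult) measurable
  finally have eq: "ennreal (fact n) =
      ennreal (l^(n+1)) * (\<integral>\<^sup>+t. ennreal (t^n * exp (-(l*t))) * indicator {0..} t \<partial>lborel)"
    using l by (simp add: ennreal_mult'[symmetric] mult.assoc[symmetric] mult.commute)
  have "ennreal (fact n / l^(n+1)) = ennreal (1 / l^(n+1)) * ennreal (fact n)"
    using l by (simp add: ennreal_mult'[symmetric])
  also have "\<dots> = (\<integral>\<^sup>+t. ennreal (t^n * exp (-(l*t))) * indicator {0..} t \<partial>lborel)"
    unfolding eq using l by (simp add: mult.assoc[symmetric] ennreal_mult'[symmetric] del: ennreal_mult)
  finally show ?thesis by simp
qed

lemma nn_integral_exp_neg_square_finite:
  fixes m :: real
  assumes m: "m > 0"
  shows "(\<integral>\<^sup>+t. ennreal (exp (-(m/2) * t^2)) \<partial>lborel) < \<infinity>"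
proof -
  define \<sigma> where "\<sigma> = 1 / sqrt m"
  have \<sigma>: "\<sigma> > 0" "\<sigma>^2 = 1/m" using m by (simp_all add: \<sigma>_def power_divide)
  have "exp (-(m/2) * t^2) = sqrt (2 * pi * \<sigma>^2) * normal_density 0 \<sigma> t" for t
    using m by (simp add: normal_density_def \<sigma>(2) field_simps)
  then have "integrable lborel (\<lambda>t. exp (-(m/2) * t^2))"
    using integrable_normal_density[OF \<sigma>(1), of 0] by simp
  then show ?thesis by (simp add: integrable_iff_bounded)
qed

section \<open>Laplace asymptotics of the tail kernel\<close>

definition scale_coords :: "'d set \<Rightarrow> real \<Rightarrow> real^'d::finite \<Rightarrow> real^'d" where
  "scale_coords I u y = (\<chi> i. if i \<in> I then y$i / u else y$i)"

definition drop_coords :: "'d set \<Rightarrow> real^'d::finite \<Rightarrow> real^'d" where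
  "drop_coords I y = (\<chi> i. if i \<in> I then 0 else y$i)"

text \<open>After the substitution \<open>x = u c\<^sup>~ + scale_coords I u y\<close>, the Gaussian density restricted to
  \<open>{x > c u}\<close> is a constant multiple of \<open>tail_kernel (\<Sigma>\<^sup>-\<^sup>1) \<lambda> (c\<^sup>~ - c) I u\<close>; here \<open>\<lambda> = \<Sigma>\<^sup>-\<^sup>1 c\<^sup>~\<close>.\<close>

definition tail_kernel ::
    "real^'d::finite^'d \<Rightarrow> real^'d \<Rightarrow> real^'d \<Rightarrow> 'd set \<Rightarrow> real \<Rightarrow> real^'d \<Rightarrow> real" where
  "tail_kernel Q lam dl I u y =
     exp (-(lam \<bullet> y) - (scale_coords I u y \<bullet> (Q *v scale_coords I u y)) / 2) *
     indicator {y. \<forall>i. (if i \<in> I then 0 else -(dl$i * u)) < y$i} y"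

definition limit_kernel :: "real^'d::finite^'d \<Rightarrow> real^'d \<Rightarrow> real^'d \<Rightarrow> 'd set \<Rightarrow> real^'d \<Rightarrow> real" where
  "limit_kernel Q lam dl I y =
     exp (-(lam \<bullet> y) - (drop_coords I y \<bullet> (Q *v drop_coords I y)) / 2) *
     indicator {y. \<forall>i. (i \<in> I \<or> dl$i = 0) \<longrightarrow> 0 < y$i} y"

definition dominating_kernel :: "real^'d::finite \<Rightarrow> real \<Rightarrow> 'd set \<Rightarrow> real^'d \<Rightarrow> real" where
  "dominating_kernel lam m I y = (\<Prod>i\<in>UNIV.
     if i \<in> I then (1 + y$i) * exp (-(lam$i * y$i)) * indicator {0..} (y$i)
     else exp (-(m/2) * (y$i)^2))"

lemma borel_measurable_tail_kernel [measurable]: "tail_kernel Q lam dl I u \<in> borel_measurable borel"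
  unfolding tail_kernel_def[abs_def] scale_coords_def by measurable

lemma borel_measurable_limit_kernel [measurable]: "limit_kernel Q lam dl I \<in> borel_measurable borel"
  unfolding limit_kernel_def[abs_def] drop_coords_def by measurable

lemma borel_measurable_dominating_kernel [measurable]:
  "dominating_kernel lam m I \<in> borel_measurable borel"
  unfolding dominating_kernel_def by measurable

lemma dominating_kernel_nonneg: "0 \<le> dominating_kernel lam m I y"
  unfolding dominating_kernel_def by (intro prod_nonneg) (auto simp: indicator_def)

lemma integrable_dominating_kernel:
  assumes m: "m > 0" and lamI: "\<And>i. i \<in> I \<Longrightarrow> lam$i > 0"
  shows "integrable lborel (dominating_kernel lam m I)"
proof (rule integrableI_nonneg)
  show "AE x in lborel. 0 \<le> dominating_kernel lam m I x"
    by (simp add: dominating_kernel_nonneg)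
  define \<phi> where "\<phi> i t = (if i \<in> I then (1 + t) * exp (-(lam$i * t)) * indicator {0..} t
     else exp (-(m/2) * t^2))" for i t
  have \<phi>_nonneg: "0 \<le> \<phi> i t" for i t by (simp add: \<phi>_def indicator_def)
  have "(\<integral>\<^sup>+t. ennreal (\<phi> i t) \<partial>lborel) < \<infinity>" for i
  proof (cases "i \<in> I")
    case True
    have l: "lam$i > 0" using lamI True by simp
    have "(\<integral>\<^sup>+t. ennreal (\<phi> i t) \<partial>lborel) =
       (\<integral>\<^sup>+t. ennreal (t^0 * exp (-(lam$i*t))) * indicator {0..} t
           + ennreal (t^1 * exp (-(lam$i*t))) * indicator {0..} t \<partial>lborel)"
      using True by (intro nn_integral_cong)
        (auto simp: \<phi>_def indicator_def ennreal_plus[symmetric] distrib_right simp del: ennreal_plus)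
    also have "\<dots> = (\<integral>\<^sup>+t. ennreal (t^0 * exp (-(lam$i*t))) * indicator {0..} t \<partial>lborel) +
          (\<integral>\<^sup>+t. ennreal (t^1 * exp (-(lam$i*t))) * indicator {0..} t \<partial>lborel)"
      by (rule nn_integral_add) measurable
    also have "\<dots> = ennreal (fact 0 / lam$i^(0+1)) + ennreal (fact 1 / lam$i^(1+1))"
      by (simp only: nn_integral_power_exp_Ici[OF l])
    finally show ?thesis by simp
  qed (use nn_integral_exp_neg_square_finite[OF m] in \<open>simp add: \<phi>_def\<close>)
  moreover have "(\<integral>\<^sup>+x. ennreal (dominating_kernel lam m I x) \<partial>lborel) =
      (\<Prod>i\<in>UNIV. \<integral>\<^sup>+t. ennreal (\<phi> i t) \<partial>lborel)"
  proof -
    have "(\<integral>\<^sup>+x. ennreal (dominating_kernel lam m I x) \<partial>lborel) =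
        (\<integral>\<^sup>+x. (\<Prod>i\<in>UNIV. ennreal (\<phi> i (x$i))) \<partial>lborel)"
      unfolding dominating_kernel_def
      by (intro nn_integral_cong) (simp add: prod_ennreal \<phi>_nonneg \<phi>_def[symmetric])
    also have "\<dots> = (\<Prod>i\<in>UNIV. \<integral>\<^sup>+t. ennreal (\<phi> i t) \<partial>lborel)"
      by (rule nn_integral_lborel_vec_prod) (simp add: \<phi>_def)
    finally show ?thesis .
  qed
  ultimately show "(\<integral>\<^sup>+x. ennreal (dominating_kernel lam m I x) \<partial>lborel) < \<infinity>"
    by (simp add: ennreal_prod_eq_top top.not_eq_extremum[symmetric])
qed simp

lemma tail_kernel_nonneg: "0 \<le> tail_kernel Q lam dl I u y"
  by (simp add: tail_kernel_def)

lemma tail_kernel_exponent_lower_bound: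
  fixes Q :: "real^'d::finite^'d"
  assumes m: "m > 0" and Qm: "\<And>v. m * (v \<bullet> v) \<le> v \<bullet> (Q *v v)"
    and lamO: "\<And>j. j \<notin> I \<Longrightarrow> lam$j = 0"
  shows "(\<Sum>i\<in>UNIV. if i \<in> I then lam$i * y$i else (m/2) * (y$i)^2) \<le>
    lam \<bullet> y + (scale_coords I u y \<bullet> (Q *v scale_coords I u y)) / 2"
proof -
  let ?D = "scale_coords I u y"
  have "(\<Sum>i\<in>UNIV. if i \<in> I then lam$i * y$i else (m/2) * (y$i)^2) =
      (\<Sum>i\<in>UNIV. if i \<in> I then lam$i * y$i else 0) + (m/2) * (\<Sum>i\<in>UNIV. if i \<in> I then 0 else (y$i)^2)"
    by (simp add: sum.distrib[symmetric] sum_distrib_left if_distrib cong: if_cong)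
  also have "(\<Sum>i\<in>UNIV. if i \<in> I then lam$i * y$i else 0) = lam \<bullet> y"
    unfolding inner_vec_def by (intro sum.cong) (auto simp: lamO)
  also have "(\<Sum>i\<in>UNIV. if i \<in> I then 0 else (y$i)^2) \<le> ?D \<bullet> ?D"
    unfolding inner_vec_def by (intro sum_mono) (auto simp: scale_coords_def power2_eq_square)
  then have "(m/2) * (\<Sum>i\<in>UNIV. if i \<in> I then 0 else (y$i)^2) \<le> (m/2) * (?D \<bullet> ?D)"
    using m by (intro mult_left_mono) auto
  also have "\<dots> \<le> (?D \<bullet> (Q *v ?D)) / 2" using Qm[of ?D] by simp
  finally show ?thesis by simp
qed

lemma tail_kernel_le_dominating:
  fixes Q :: "real^'d::finite^'d"
  assumes m: "m > 0" and Qm: "\<And>v. m * (v \<bullet> v) \<le> v \<bullet> (Q *v v)"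
    and lamO: "\<And>j. j \<notin> I \<Longrightarrow> lam$j = 0" and kI: "k \<in> I"
  shows "tail_kernel Q lam dl I u y \<le> dominating_kernel lam m I y"
    and "\<bar>y$k\<bar> * tail_kernel Q lam dl I u y \<le> dominating_kernel lam m I y"
proof -
  have "tail_kernel Q lam dl I u y \<le> dominating_kernel lam m I y \<and>
    \<bar>y$k\<bar> * tail_kernel Q lam dl I u y \<le> dominating_kernel lam m I y"
  proof (cases "\<forall>i. (if i \<in> I then 0 else -(dl$i*u)) < y$i")
    case False
    then show ?thesis by (simp add: tail_kernel_def dominating_kernel_nonneg)
  next
    case True
    then have ypos: "\<And>i. i \<in> I \<Longrightarrow> 0 < y$i" by metis
    define a where "a i = (if i \<in> I then lam$i * y$i else (m/2) * (y$i)^2)" for i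
    define g where "g i = (if i \<in> I then 1 + y$i else 1)" for i
    define E where "E = tail_kernel Q lam dl I u y"
    have "E \<le> exp (-(\<Sum>i\<in>UNIV. a i))"
      using True tail_kernel_exponent_lower_bound[where I = I and y = y and u = u, OF m Qm lamO]
      by (simp add: E_def tail_kernel_def a_def)
    also have "\<dots> = (\<Prod>i\<in>UNIV. exp (- a i))" by (simp add: exp_sum sum_negf[symmetric])
    finally have E_le: "E \<le> (\<Prod>i\<in>UNIV. exp (- a i))" .
    have dom_eq: "dominating_kernel lam m I y = (\<Prod>i\<in>UNIV. g i) * (\<Prod>i\<in>UNIV. exp (- a i))"
      unfolding dominating_kernel_def prod.distrib[symmetric]
      by (intro prod.cong refl) (auto simp: g_def a_def ypos less_imp_le)
    have g_ge: "1 \<le> g i" for i using ypos by (auto simp: g_def less_imp_le)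
    have "\<bar>y$k\<bar> \<le> g k" using ypos[OF kI] kI by (simp add: g_def)
    also have "g k \<le> (\<Prod>i\<in>UNIV. g i)"
      using prod_mono2[of UNIV "{k}" g] g_ge by (simp add: order_trans[OF zero_le_one])
    finally have yk: "\<bar>y$k\<bar> \<le> (\<Prod>i\<in>UNIV. g i)" .
    have "0 \<le> E" by (simp add: E_def tail_kernel_nonneg)
    moreover have "1 \<le> (\<Prod>i\<in>UNIV. g i)" using g_ge by (intro prod_ge_1) auto
    moreover have "0 \<le> (\<Prod>i\<in>UNIV. exp (- a i))" by (simp add: prod_nonneg)
    ultimately have "E \<le> (\<Prod>i\<in>UNIV. g i) * (\<Prod>i\<in>UNIV. exp (- a i))"
      and "\<bar>y$k\<bar> * E \<le> (\<Prod>i\<in>UNIV. g i) * (\<Prod>i\<in>UNIV. exp (- a i))"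
      using E_le yk mult_mono[of 1 "\<Prod>i\<in>UNIV. g i" E] mult_mono[OF yk E_le] by simp_all
    then show ?thesis unfolding E_def dom_eq by simp
  qed
  then show "tail_kernel Q lam dl I u y \<le> dominating_kernel lam m I y"
    and "\<bar>y$k\<bar> * tail_kernel Q lam dl I u y \<le> dominating_kernel lam m I y" by simp_all
qed

lemma tail_kernel_tendsto:
  assumes dl: "\<And>j. j \<notin> I \<Longrightarrow> dl$j \<ge> 0"
  shows "((\<lambda>u. tail_kernel Q lam dl I u y) \<longlongrightarrow> limit_kernel Q lam dl I y) at_top"
proof -
  have "((\<lambda>u. scale_coords I u y) \<longlongrightarrow> drop_coords I y) at_top"
    unfolding scale_coords_def drop_coords_def
    by (rule vec_tendstoI)
      (auto intro!: tendsto_divide_0[OF tendsto_const] filterlim_at_top_imp_at_infinity filterlim_ident)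
  then have exp_lim: "((\<lambda>u. exp (-(lam \<bullet> y) - (scale_coords I u y \<bullet> (Q *v scale_coords I u y)) / 2))
      \<longlongrightarrow> exp (-(lam \<bullet> y) - (drop_coords I y \<bullet> (Q *v drop_coords I y)) / 2)) at_top"
    by (intro tendsto_intros bounded_linear.tendsto[OF matrix_vector_mul_bounded_linear]) simp_all
  \<comment> \<open>a coordinate \<open>j \<notin> I\<close> with \<open>c\<^sup>~\<^sub>j > c\<^sub>j\<close> imposes no constraint in the limit\<close>
  have "\<forall>\<^sub>F u in at_top. ((if i \<in> I then 0 else -(dl$i*u)) < y$i) = ((i \<in> I \<or> dl$i = 0) \<longrightarrow> 0 < y$i)"
    for i
  proof (cases "i \<in> I \<or> dl$i = 0")
    case False
    then have "dl$i > 0" using dl[of i] by auto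
    show ?thesis using eventually_gt_at_top[of "- y$i / dl$i"]
      by eventually_elim (use False \<open>dl$i > 0\<close> in \<open>auto simp: field_simps\<close>)
  qed auto
  then have "\<forall>\<^sub>F u in at_top. \<forall>i. ((if i \<in> I then 0 else -(dl$i*u)) < y$i) =
      ((i \<in> I \<or> dl$i = 0) \<longrightarrow> 0 < y$i)"
    by (rule eventually_all_finite)
  then have "\<forall>\<^sub>F u in at_top. indicator {y. \<forall>i. (if i \<in> I then 0 else -(dl$i*u)) < y$i} y =
      (indicator {y. \<forall>i. (i \<in> I \<or> dl$i = 0) \<longrightarrow> 0 < y$i} y :: real)"
    by eventually_elim (simp add: indicator_def)
  with exp_lim show ?thesis
    unfolding tail_kernel_def limit_kernel_def by (rule tendsto_mult[OF _ tendsto_eventually])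
qed

lemma limit_kernel_nonneg: "0 \<le> limit_kernel Q lam dl I y"
  by (simp add: limit_kernel_def)

lemma limit_kernel_integral_pos:
  fixes Q :: "real^'d::finite^'d"
  assumes "integrable lborel (limit_kernel Q lam dl I)"
  shows "(\<integral>y. limit_kernel Q lam dl I y \<partial>lborel) > 0"
proof -
  have pos: "limit_kernel Q lam dl I y > 0" if "y \<in> box 0 One" for y
  proof -
    have "0 < y$i" for i
      using that[unfolded mem_box, rule_format, of "axis i 1"] by (simp add: inner_axis)
    then show ?thesis by (simp add: limit_kernel_def)
  qed
  have "(\<integral>y. limit_kernel Q lam dl I y \<partial>lborel) \<noteq> 0"
  proof
    assume "(\<integral>y. limit_kernel Q lam dl I y \<partial>lborel) = 0"
    then have "AE y in lborel. limit_kernel Q lam dl I y = 0"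
      using integral_nonneg_eq_0_iff_AE[OF assms] by (simp add: limit_kernel_nonneg)
    then have "AE y in lborel. y \<notin> box 0 (One :: real^'d)"
    proof (rule eventually_mono)
      show "y \<notin> box 0 One" if "limit_kernel Q lam dl I y = 0" for y
        using that pos[of y] by (cases "y \<in> box 0 One") simp_all
    qed
    then have "emeasure lborel (box 0 (One :: real^'d)) = 0"
      by (subst (asm) AE_iff_measurable[OF _ refl]) auto
    moreover have "emeasure lborel (box 0 (One :: real^'d)) = 1"
      by (subst emeasure_lborel_box) (auto simp: inner_Basis)
    ultimately show False by simp
  qed
  moreover have "(\<integral>y. limit_kernel Q lam dl I y \<partial>lborel) \<ge> 0"
    by (rule integral_nonneg_AE) (simp add: limit_kernel_nonneg)
  ultimately show ?thesis by linarith
qed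

lemma limit_kernel_factor:
  fixes Q :: "real^'d::finite^'d"
  assumes "k \<in> I"
  obtains R where "R \<in> borel_measurable borel" and "\<And>z. 0 \<le> R z"
    and "\<And>y. limit_kernel Q lam dl I y =
      exp (-(lam$k * y$k)) * indicator {0<..} (y$k) * R (\<chi> i. if i = k then 0 else y$i)"
proof
  define R where "R z = exp (-(lam \<bullet> z) - (drop_coords I z \<bullet> (Q *v drop_coords I z)) / 2) *
      indicator {z. \<forall>i. (i \<noteq> k \<and> (i \<in> I \<or> dl$i = 0)) \<longrightarrow> 0 < z$i} z" for z :: "real^'d"
  show "R \<in> borel_measurable borel" unfolding R_def[abs_def] drop_coords_def by measurable
  show "0 \<le> R z" for z by (simp add: R_def)
  fix y :: "real^'d"
  let ?z = "(\<chi> i. if i = k then 0 else y$i) :: real^'d"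
  have "lam \<bullet> y = (\<Sum>i\<in>UNIV. lam$i * ?z$i + (if i = k then lam$k * y$k else 0))"
    unfolding inner_vec_def by (intro sum.cong) auto
  then have "lam \<bullet> y = lam \<bullet> ?z + lam$k * y$k"
    by (simp add: sum.distrib inner_vec_def)
  moreover have "drop_coords I ?z = drop_coords I y"
    using assms by (auto simp: drop_coords_def vec_eq_iff)
  ultimately have "exp (-(lam \<bullet> y) - (drop_coords I y \<bullet> (Q *v drop_coords I y)) / 2) =
      exp (-(lam$k * y$k)) * exp (-(lam \<bullet> ?z) - (drop_coords I ?z \<bullet> (Q *v drop_coords I ?z)) / 2)"
    using \<open>drop_coords I ?z = drop_coords I y\<close> by (simp add: exp_add[symmetric])
  moreover have "indicator {y. \<forall>i. (i \<in> I \<or> dl$i = 0) \<longrightarrow> 0 < y$i} y =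
      (indicator {0<..} (y$k) :: real) * indicator {z. \<forall>i. (i \<noteq> k \<and> (i \<in> I \<or> dl$i = 0)) \<longrightarrow> 0 < z$i} ?z"
    using assms by (auto simp: indicator_def)
  ultimately show "limit_kernel Q lam dl I y =
      exp (-(lam$k * y$k)) * indicator {0<..} (y$k) * R ?z"
    by (simp add: limit_kernel_def R_def)
qed
lemma limit_kernel_first_moment:
  fixes Q :: "real^'d::finite^'d"
  assumes l: "lam$k > 0" and "k \<in> I"
  shows "(\<integral>y. y$k * limit_kernel Q lam dl I y \<partial>lborel) =
    (\<integral>y. limit_kernel Q lam dl I y \<partial>lborel) / lam$k"
proof -
  let ?l = "lam$k"
  obtain R where [measurable]: "R \<in> borel_measurable borel" and R_nonneg: "\<And>z. 0 \<le> R z"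
    and L_eq: "\<And>y. limit_kernel Q lam dl I y =
      exp (-(?l * y$k)) * indicator {0<..} (y$k) * R (\<chi> i. if i = k then 0 else y$i)"
    using limit_kernel_factor[OF assms(2)] by blast
  obtain K where split: "\<And>\<phi>. \<phi> \<in> borel_measurable borel \<Longrightarrow>
    (\<integral>\<^sup>+y. \<phi> (y$k) * ennreal (R (\<chi> i. if i = k then 0 else y$i)) \<partial>(lborel :: (real^'d) measure)) =
      (\<integral>\<^sup>+t. \<phi> t \<partial>lborel) * K"
    using nn_integral_lborel_split_coordinate[of "\<lambda>z. ennreal (R z)" k] by auto
  have moment: "(\<integral>\<^sup>+y. ennreal (y$k ^ n * limit_kernel Q lam dl I y) \<partial>lborel) =
      ennreal (fact n / ?l^(n+1)) * K" for n
  proof -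
    have "(\<integral>\<^sup>+y. ennreal (y$k ^ n * limit_kernel Q lam dl I y) \<partial>lborel) =
      (\<integral>\<^sup>+y. ennreal ((y$k) ^ n * exp (-(?l * y$k)) * indicator {0<..} (y$k))
        * ennreal (R (\<chi> i. if i = k then 0 else y$i)) \<partial>lborel)"
      by (intro nn_integral_cong) (simp add: L_eq ennreal_mult'[symmetric] R_nonneg indicator_def)
    also have "\<dots> = (\<integral>\<^sup>+t. ennreal (t ^ n * exp (-(?l * t)) * indicator {0<..} t) \<partial>lborel) * K"
      by (rule split) measurable
    also have "(\<integral>\<^sup>+t. ennreal (t ^ n * exp (-(?l * t)) * indicator {0<..} t) \<partial>lborel) =
        (\<integral>\<^sup>+t. ennreal (t ^ n * exp (-(?l * t))) * indicator {0..} t \<partial>lborel)"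
      using AE_lborel_singleton[of 0]
      by (intro nn_integral_cong_AE) (auto elim!: eventually_mono simp: indicator_def)
    finally show ?thesis by (simp only: nn_integral_power_exp_Ici[OF l])
  qed
  have integral_moment: "(\<integral>y. y$k ^ n * limit_kernel Q lam dl I y \<partial>lborel) =
      fact n / ?l^(n+1) * enn2real K" for n
  proof -
    have "AE y in lborel. 0 \<le> y$k ^ n * limit_kernel Q lam dl I y"
      by (intro AE_I2) (simp add: L_eq R_nonneg indicator_def)
    then show ?thesis
      using moment[of n] l by (simp add: integral_eq_nn_integral enn2real_mult)
  qed
  show ?thesis
    using integral_moment[of 0] integral_moment[of 1] l by (simp add: power2_eq_square)
qed

lemma integrable_tail_kernel:
  fixes Q :: "real^'d::finite^'d"
  assumes m: "m > 0" and Qm: "\<And>v. m * (v \<bullet> v) \<le> v \<bullet> (Q *v v)"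
    and lamI: "\<And>i. i \<in> I \<Longrightarrow> lam$i > 0" and lamO: "\<And>j. j \<notin> I \<Longrightarrow> lam$j = 0" and kI: "k \<in> I"
  shows "integrable lborel (tail_kernel Q lam dl I u)"
    and "integrable lborel (\<lambda>y. y$k * tail_kernel Q lam dl I u y)"
proof -
  note H = integrable_dominating_kernel[OF m lamI]
  note le = tail_kernel_le_dominating[OF m Qm lamO kI]
  show "integrable lborel (tail_kernel Q lam dl I u)"
  proof (rule Bochner_Integration.integrable_bound[OF H])
    show "AE y in lborel. norm (tail_kernel Q lam dl I u y) \<le> norm (dominating_kernel lam m I y)"
      by (intro AE_I2) (simp add: tail_kernel_nonneg dominating_kernel_nonneg le)
  qed measurable
  show "integrable lborel (\<lambda>y. y$k * tail_kernel Q lam dl I u y)"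
  proof (rule Bochner_Integration.integrable_bound[OF H])
    show "AE y in lborel. norm (y$k * tail_kernel Q lam dl I u y) \<le> norm (dominating_kernel lam m I y)"
      by (intro AE_I2) (simp add: abs_mult tail_kernel_nonneg dominating_kernel_nonneg le)
  qed measurable
qed

lemma tail_kernel_moment_ratio_tendsto:
  fixes Q :: "real^'d::finite^'d"
  assumes m: "m > 0" and Qm: "\<And>v. m * (v \<bullet> v) \<le> v \<bullet> (Q *v v)"
    and lamI: "\<And>i. i \<in> I \<Longrightarrow> lam$i > 0" and lamO: "\<And>j. j \<notin> I \<Longrightarrow> lam$j = 0"
    and dl: "\<And>j. j \<notin> I \<Longrightarrow> dl$j \<ge> 0" and kI: "k \<in> I"
  shows "((\<lambda>u. (\<integral>y. y$k * tail_kernel Q lam dl I u y \<partial>lborel) /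
      (\<integral>y. tail_kernel Q lam dl I u y \<partial>lborel)) \<longlongrightarrow> 1 / lam$k) at_top"
    and "\<forall>\<^sub>F u in at_top. 0 < (\<integral>y. tail_kernel Q lam dl I u y \<partial>lborel)"
proof -
  let ?h = "tail_kernel Q lam dl I" and ?L = "limit_kernel Q lam dl I"
  let ?H = "dominating_kernel lam m I"
  have H: "integrable lborel ?H" by (rule integrable_dominating_kernel[OF m lamI])
  have bound0: "\<forall>\<^sub>F u in at_top. AE y in lborel. norm (?h u y) \<le> ?H y"
    and bound1: "\<forall>\<^sub>F u in at_top. AE y in lborel. norm (y$k * ?h u y) \<le> ?H y"
    using tail_kernel_le_dominating[OF m Qm lamO kI] by (simp_all add: tail_kernel_nonneg abs_mult)
  have lim0: "AE y in lborel. ((\<lambda>u. ?h u y) \<longlongrightarrow> ?L y) at_top"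
    and lim1: "AE y in lborel. ((\<lambda>u. y$k * ?h u y) \<longlongrightarrow> y$k * ?L y) at_top"
    using tail_kernel_tendsto[OF dl] by (simp_all add: tendsto_mult_left)
  have "integrable lborel ?L"
    by (rule integrable_dominated_convergence_at_top[OF _ _ H lim0 bound0]) simp_all
  then have L_pos: "(\<integral>y. ?L y \<partial>lborel) > 0" by (rule limit_kernel_integral_pos)
  have T0: "((\<lambda>u. \<integral>y. ?h u y \<partial>lborel) \<longlongrightarrow> (\<integral>y. ?L y \<partial>lborel)) at_top"
    by (rule integral_dominated_convergence_at_top[OF _ _ H lim0 bound0]) simp_all
  have T1: "((\<lambda>u. \<integral>y. y$k * ?h u y \<partial>lborel) \<longlongrightarrow> (\<integral>y. y$k * ?L y \<partial>lborel)) at_top"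
    by (rule integral_dominated_convergence_at_top[OF _ _ H lim1 bound1]) simp_all
  have "((\<lambda>u. (\<integral>y. y$k * ?h u y \<partial>lborel) / (\<integral>y. ?h u y \<partial>lborel)) \<longlongrightarrow>
     (\<integral>y. y$k * ?L y \<partial>lborel) / (\<integral>y. ?L y \<partial>lborel)) at_top"
    using L_pos by (intro tendsto_divide T1 T0) simp
  then show "((\<lambda>u. (\<integral>y. y$k * ?h u y \<partial>lborel) / (\<integral>y. ?h u y \<partial>lborel)) \<longlongrightarrow> 1 / lam$k) at_top"
    using L_pos by (simp add: limit_kernel_first_moment[OF lamI[OF kI] kI])
  show "\<forall>\<^sub>F u in at_top. 0 < (\<integral>y. ?h u y \<partial>lborel)"
    by (rule order_tendstoD(1)[OF T0 L_pos])
qed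

section \<open>Change of variables in the conditional mean\<close>

lemma cond_mean_eq_density_integrals:
  fixes X :: "'a \<Rightarrow> real^'d::finite" and g :: "real^'d \<Rightarrow> real" and c :: "real^'d" and u :: real
  assumes "prob_space M" and D: "distributed M lborel X (\<lambda>x. ennreal (g x))"
    and [measurable]: "g \<in> borel_measurable borel" and g_nonneg: "\<And>x. 0 \<le> g x"
  defines "A \<equiv> {x. \<forall>i. c$i * u < x$i}"
  shows "cond_mean M X k c u =
    (\<integral>x. g x * (x$k * indicator A x) \<partial>lborel) / (\<integral>x. g x * indicator A x \<partial>lborel)"
proof -
  interpret prob_space M by fact
  have [measurable]: "X \<in> measurable M borel" "A \<in> sets borel"
    using distributed_measurable[OF D] by (simp_all add: A_def)
  have event: "{\<omega> \<in> space M. \<forall>i. X \<omega> $ i > c $ i * u} = X -` A \<inter> space M" by (auto simp: A_def)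
  have "(\<integral>\<omega>. X \<omega> $ k * indicator (X -` A \<inter> space M) \<omega> \<partial>M) = (\<integral>\<omega>. X \<omega> $ k * indicator A (X \<omega>) \<partial>M)"
    by (rule Bochner_Integration.integral_cong) (auto simp: indicator_def)
  also have "\<dots> = (\<integral>x. g x * (x$k * indicator A x) \<partial>lborel)"
    by (rule distributed_integral[OF D, symmetric]) (auto simp: g_nonneg)
  finally have num: "(\<integral>\<omega>. X \<omega> $ k * indicator (X -` A \<inter> space M) \<omega> \<partial>M) =
    (\<integral>x. g x * (x$k * indicator A x) \<partial>lborel)" .
  have "measure M (X -` A \<inter> space M) = (\<integral>\<omega>. indicator A (X \<omega>) \<partial>M)"
    by (simp add: indicator_vimage[symmetric] Int_commute[of _ "space M"])
  also have "\<dots> = (\<integral>x. g x * indicator A x \<partial>lborel)"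
    by (rule distributed_integral[OF D, symmetric]) (auto simp: g_nonneg)
  finally show ?thesis unfolding cond_mean_def Let_def event num by simp
qed

lemma integral_lborel_scale_coords:
  fixes t :: "real^'d::finite"
  assumes u: "u > 0"
  obtains J where "J > 0" and "\<And>F :: real^'d \<Rightarrow> real. F \<in> borel_measurable borel \<Longrightarrow>
    (\<integral>x. F x \<partial>lborel) = J * (\<integral>y. F (t + scale_coords I u y) \<partial>lborel)"
proof -
  define c where "c j = (if axis_index j \<in> I then 1/u else 1)" for j :: "real^'d"
  define J where "J = (\<Prod>j\<in>(Basis::(real^'d) set). \<bar>c j\<bar>)"
  have "t + (\<Sum>j\<in>Basis. (c j * (y \<bullet> j)) *\<^sub>R j) = t + scale_coords I u y" for y
    using sum_Basis_vec_nth[of Basis "\<lambda>j. c j * (y \<bullet> j)"]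
    by (simp add: vec_eq_iff scale_coords_def c_def inner_axis)
  then have T_eq: "(\<lambda>y. t + (\<Sum>j\<in>Basis. (c j * (y \<bullet> j)) *\<^sub>R j)) = (\<lambda>y. t + scale_coords I u y)"
    by (rule ext)
  have "(lborel :: (real^'d) measure) =
      density (distr lborel borel (\<lambda>y. t + (\<Sum>j\<in>Basis. (c j * (y \<bullet> j)) *\<^sub>R j))) (\<lambda>_. ennreal J)"
    unfolding J_def by (rule lborel_affine_euclidean) (use u in \<open>auto simp: c_def\<close>)
  then have lb: "(lborel :: (real^'d) measure) =
      density (distr lborel borel (\<lambda>y. t + scale_coords I u y)) (\<lambda>_. ennreal J)"
    unfolding T_eq .
  have J: "J > 0" unfolding J_def using u by (intro prod_pos) (auto simp: c_def)
  have [measurable]: "(\<lambda>y. t + scale_coords I u y) \<in> borel_measurable borel"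
    unfolding scale_coords_def by measurable
  have "(\<integral>x. F x \<partial>lborel) = J * (\<integral>y. F (t + scale_coords I u y) \<partial>lborel)"
    if [measurable]: "F \<in> borel_measurable borel" for F :: "real^'d \<Rightarrow> real"
  proof -
    have "(\<integral>x. F x \<partial>lborel) =
        (\<integral>x. F x \<partial>density (distr lborel borel (\<lambda>y. t + scale_coords I u y)) (\<lambda>_. ennreal J))"
      by (subst lb) (rule refl)
    also have "\<dots> = (\<integral>x. J *\<^sub>R F x \<partial>distr lborel borel (\<lambda>y. t + scale_coords I u y))"
      using J by (intro integral_density) auto
    also have "\<dots> = (\<integral>y. J *\<^sub>R F (t + scale_coords I u y) \<partial>lborel)"
      by (rule integral_distr) auto
    finally show ?thesis by simp
  qed
  with J show thesis by (rule that)
qed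

lemma quadratic_form_shift_scale_coords:
  fixes Q :: "real^'d::finite^'d" and y :: "real^'d"
  assumes sym: "transpose Q = Q" and Qct: "Q *v ct = lam"
    and lamO: "\<And>j. j \<notin> I \<Longrightarrow> lam$j = 0" and u: "u > 0"
  defines "D \<equiv> scale_coords I u y"
  shows "(u *\<^sub>R ct + D) \<bullet> (Q *v (u *\<^sub>R ct + D)) =
    u^2 * (ct \<bullet> (Q *v ct)) + 2 * (lam \<bullet> y) + D \<bullet> (Q *v D)"
proof -
  \<comment> \<open>\<open>\<lambda>\<close> vanishes off \<open>I\<close>, so the cross term sees only the rescaled coordinates\<close>
  have "D \<bullet> lam = (lam \<bullet> y) / u"
    unfolding inner_vec_def sum_divide_distrib D_def
    by (intro sum.cong) (auto simp: scale_coords_def lamO)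
  then show ?thesis
    using u Qct inner_symmetric_matrix_commute[OF sym, of ct D]
    by (simp add: matrix_vector_right_distrib matrix_vector_mult_scaleR inner_add_left inner_add_right
        power2_eq_square algebra_simps)
qed

lemma gauss_tail_shift_eq_tail_kernel:
  fixes Q :: "real^'d::finite^'d" and y :: "real^'d"
  assumes sym: "transpose Q = Q" and Qct: "Q *v ct = lam"
    and lamO: "\<And>j. j \<notin> I \<Longrightarrow> lam$j = 0" and ctI: "\<And>i. i \<in> I \<Longrightarrow> ct$i = c$i" and u: "u > 0"
  defines "x \<equiv> u *\<^sub>R ct + scale_coords I u y"
  shows "exp (- (x \<bullet> (Q *v x)) / 2) * indicator {x. \<forall>i. c$i * u < x$i} x =
    exp (- (u^2 * (ct \<bullet> (Q *v ct))) / 2) * tail_kernel Q lam (ct - c) I u y"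
proof -
  have "x \<bullet> (Q *v x) =
      u^2 * (ct \<bullet> (Q *v ct)) + 2 * (lam \<bullet> y) + scale_coords I u y \<bullet> (Q *v scale_coords I u y)"
    unfolding x_def by (rule quadratic_form_shift_scale_coords[OF sym Qct lamO u])
  then have "exp (- (x \<bullet> (Q *v x)) / 2) = exp (- (u^2 * (ct \<bullet> (Q *v ct))) / 2) *
      exp (-(lam \<bullet> y) - (scale_coords I u y \<bullet> (Q *v scale_coords I u y)) / 2)"
    by (simp add: exp_add[symmetric] field_simps)
  moreover have "(c$i * u < x$i) \<longleftrightarrow> (if i \<in> I then 0 else -((ct - c)$i * u)) < y$i" for i
    using u ctI[of i] by (cases "i \<in> I") (auto simp: x_def scale_coords_def field_simps)
  ultimately show ?thesis by (simp add: tail_kernel_def indicator_def)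
qed

lemma integral_gauss_tail_eq_tail_kernel:
  fixes Q :: "real^'d::finite^'d"
  assumes sym: "transpose Q = Q" and Qct: "Q *v ct = lam"
    and lamO: "\<And>j. j \<notin> I \<Longrightarrow> lam$j = 0" and ctI: "\<And>i. i \<in> I \<Longrightarrow> ct$i = c$i" and u: "u > 0"
  obtains J where "J > 0" and "\<And>\<phi>. \<phi> \<in> borel_measurable borel \<Longrightarrow>
    (\<integral>x. exp (- (x \<bullet> (Q *v x)) / 2) * (\<phi> x * indicator {x. \<forall>i. c$i * u < x$i} x) \<partial>lborel) =
    J * (\<integral>y. \<phi> (u *\<^sub>R ct + scale_coords I u y) * tail_kernel Q lam (ct - c) I u y \<partial>lborel)"
proof -
  let ?T = "\<lambda>y. u *\<^sub>R ct + scale_coords I u y"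
  define E where "E = exp (- (u^2 * (ct \<bullet> (Q *v ct))) / 2)"
  obtain J where "J > 0" and cov: "\<And>F :: real^'d \<Rightarrow> real. F \<in> borel_measurable borel \<Longrightarrow>
      (\<integral>x. F x \<partial>lborel) = J * (\<integral>y. F (?T y) \<partial>lborel)"
    using integral_lborel_scale_coords[OF u] by metis
  have "(\<integral>x. exp (- (x \<bullet> (Q *v x)) / 2) * (\<phi> x * indicator {x. \<forall>i. c$i * u < x$i} x) \<partial>lborel) =
      (J * E) * (\<integral>y. \<phi> (?T y) * tail_kernel Q lam (ct - c) I u y \<partial>lborel)"
    if [measurable]: "\<phi> \<in> borel_measurable borel" for \<phi>
  proof -
    let ?A = "{x. \<forall>i. c$i * u < x$i}"
    have shift: "exp (- (?T y \<bullet> (Q *v ?T y)) / 2) * indicator ?A (?T y) =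
        E * tail_kernel Q lam (ct - c) I u y" for y
      unfolding E_def by (rule gauss_tail_shift_eq_tail_kernel[where I = I, OF sym Qct lamO ctI u])
    have "(\<integral>x. exp (- (x \<bullet> (Q *v x)) / 2) * (\<phi> x * indicator ?A x) \<partial>lborel) =
        J * (\<integral>y. exp (- (?T y \<bullet> (Q *v ?T y)) / 2) * (\<phi> (?T y) * indicator ?A (?T y)) \<partial>lborel)"
      by (rule cov) measurable
    also have "\<dots> = J * (\<integral>y. E * (\<phi> (?T y) * tail_kernel Q lam (ct - c) I u y) \<partial>lborel)"
      by (simp only: mult.left_commute[of "exp _"] shift mult.left_commute[of E])
    finally show ?thesis by simp
  qed
  moreover have "J * E > 0" using \<open>J > 0\<close> by (simp add: E_def)
  ultimately show thesis using that by blast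
qed

lemma gauss_density_normalizer_pos:
  fixes X :: "'a \<Rightarrow> real^'d::finite" and S :: "real^'d^'d"
  assumes "prob_space M" and D: "distributed M lborel X (gauss_density S)"
  shows "sqrt ((2 * pi) ^ CARD('d) * det S) > 0"
proof (rule ccontr)
  interpret prob_space M by fact
  assume "\<not> ?thesis"
  then have "exp (- (x \<bullet> (matrix_inv S *v x)) / 2) / sqrt ((2 * pi) ^ CARD('d) * det S) \<le> 0" for x
    by (simp add: divide_nonneg_nonpos)
  then have "{x \<in> space lborel. gauss_density S x \<noteq> 0} = {}"
    by (simp add: gauss_density_def ennreal_eq_0_iff)
  then show False using distributed_imp_emeasure_nonzero[OF D] by simp
qed

lemma cond_mean_eq_tail_kernel_ratio:
  fixes X :: "'a \<Rightarrow> real^'d::finite" and S :: "real^'d^'d"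
  assumes "prob_space M" and D: "distributed M lborel X (gauss_density S)"
    and sym: "transpose (matrix_inv S) = matrix_inv S"
    and Qct: "matrix_inv S *v ct = lam"
    and lamO: "\<And>j. j \<notin> I \<Longrightarrow> lam$j = 0" and ctI: "\<And>i. i \<in> I \<Longrightarrow> ct$i = c$i"
    and kI: "k \<in> I" and u: "u > 0"
    and int0: "integrable lborel (tail_kernel (matrix_inv S) lam (ct - c) I u)"
    and int1: "integrable lborel (\<lambda>y. y$k * tail_kernel (matrix_inv S) lam (ct - c) I u y)"
    and pos: "(\<integral>y. tail_kernel (matrix_inv S) lam (ct - c) I u y \<partial>lborel) > 0"
  shows "u * (cond_mean M X k c u - c$k * u) =
    (\<integral>y. y$k * tail_kernel (matrix_inv S) lam (ct - c) I u y \<partial>lborel) /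
    (\<integral>y. tail_kernel (matrix_inv S) lam (ct - c) I u y \<partial>lborel)"
proof -
  let ?Q = "matrix_inv S" and ?h = "tail_kernel (matrix_inv S) lam (ct - c) I u"
  let ?A = "{x. \<forall>i. c$i * u < x$i}"
  define sd where "sd = sqrt ((2 * pi) ^ CARD('d) * det S)"
  define e where "e x = exp (- (x \<bullet> (?Q *v x)) / 2)" for x :: "real^'d"
  have sd: "sd > 0" unfolding sd_def by (rule gauss_density_normalizer_pos[OF assms(1) D])
  have Dg: "distributed M lborel X (\<lambda>x. ennreal (e x / sd))"
    using D unfolding gauss_density_def e_def sd_def by simp
  obtain J where "J > 0" and J: "\<And>\<phi>. \<phi> \<in> borel_measurable borel \<Longrightarrow>
      (\<integral>x. e x * (\<phi> x * indicator ?A x) \<partial>lborel) =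
      J * (\<integral>y. \<phi> (u *\<^sub>R ct + scale_coords I u y) * ?h y \<partial>lborel)"
    using integral_gauss_tail_eq_tail_kernel[OF sym Qct lamO ctI u] unfolding e_def by blast
  have "(\<integral>x. e x * (x$k * indicator ?A x) \<partial>lborel) =
      J * (\<integral>y. (u * c$k) * ?h y + (1/u) * (y$k * ?h y) \<partial>lborel)"
    using J[of "\<lambda>x. x$k"] kI ctI[OF kI] by (simp add: scale_coords_def algebra_simps)
  also have "\<dots> = J * (u * c$k * (\<integral>y. ?h y \<partial>lborel) + (\<integral>y. y$k * ?h y \<partial>lborel) / u)"
    using int0 int1 by simp
  finally have num: "(\<integral>x. e x * (x$k * indicator ?A x) \<partial>lborel) = \<dots>" .
  have den: "(\<integral>x. e x * indicator ?A x \<partial>lborel) = J * (\<integral>y. ?h y \<partial>lborel)"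
    using J[of "\<lambda>_. 1"] by simp
  have "cond_mean M X k c u =
      (\<integral>x. e x / sd * (x$k * indicator ?A x) \<partial>lborel) / (\<integral>x. e x / sd * indicator ?A x \<partial>lborel)"
    by (rule cond_mean_eq_density_integrals[OF assms(1) Dg]) (use sd in \<open>simp_all add: e_def[abs_def]\<close>)
  also have "\<dots> = (\<integral>x. e x * (x$k * indicator ?A x) \<partial>lborel) / (\<integral>x. e x * indicator ?A x \<partial>lborel)"
    using sd by simp
  also have "\<dots> = (u * c$k * (\<integral>y. ?h y \<partial>lborel) + (\<integral>y. y$k * ?h y \<partial>lborel) / u) /
      (\<integral>y. ?h y \<partial>lborel)"
    unfolding num den using \<open>J > 0\<close> by simp
  finally show ?thesis using u pos by (simp add: field_simps)
qed
theorem mainTheorem8: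
  fixes M :: "'a measure" and X :: "'a \<Rightarrow> real^'d" and S :: "real^'d^'d"
    and c :: "real^'d" and I :: "'d set" and k :: 'd
  assumes "prob_space M"
    and "transpose S = S"
    and "\<forall>x. 0 \<le> x \<bullet> (S *v x)"
    and "invertible S"
    and "distributed M lborel X (gauss_density S)"
    and "\<exists>i. c $ i > 0"
    and "assoc_index_set S c I"
    and "k \<in> I"
  shows "((\<lambda>u. u * (cond_mean M X k c u - c $ k * u)) \<longlongrightarrow>
            1 / (\<Sum>i\<in>I. c $ i * sub_inv S I $ i $ k)) at_top
         \<and> 1 / (\<Sum>i\<in>I. c $ i * sub_inv S I $ i $ k) > 0"
proof -
  \<comment> \<open>\<open>\<exists>i. c\<^sub>i > 0\<close> only serves to make \<open>I\<close> exist; here \<open>I\<close> is given\<close>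
  note pd = assms(2-4) and kI = assms(8)
  let ?Q = "matrix_inv S" and ?l = "lagrange_vec S I c"
  obtain ct where ctI: "\<And>i. i \<in> I \<Longrightarrow> ct$i = c$i" and ctO: "\<And>j. j \<notin> I \<Longrightarrow> c$j \<le> ct$j"
    and Qct: "?Q *v ct = ?l" and l_pos: "\<And>i. i \<in> I \<Longrightarrow> ?l$i > 0"
    using assoc_index_set_lagrange_vec[OF pd assms(7)] by metis
  have l_out: "\<And>j. j \<notin> I \<Longrightarrow> ?l$j = 0" by (simp add: lagrange_vec_def)
  have dl: "\<And>j. j \<notin> I \<Longrightarrow> (ct - c)$j \<ge> 0" using ctO by simp
  note Q_pd = matrix_inv_pd[OF pd]
  obtain m where m: "m > 0" and Qm: "\<And>v. m * (v \<bullet> v) \<le> v \<bullet> (?Q *v v)"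
    using pd_form_coercive[OF Q_pd] by metis
  let ?h = "tail_kernel ?Q ?l (ct - c) I"
  have ratio: "((\<lambda>u. (\<integral>y. y$k * ?h u y \<partial>lborel) / (\<integral>y. ?h u y \<partial>lborel)) \<longlongrightarrow> 1 / ?l$k) at_top"
    and h_pos: "\<forall>\<^sub>F u in at_top. 0 < (\<integral>y. ?h u y \<partial>lborel)"
    using tail_kernel_moment_ratio_tendsto[OF m Qm l_pos l_out dl kI] by simp_all
  have int: "integrable lborel (?h u)" "integrable lborel (\<lambda>y. y$k * ?h u y)" for u
    using integrable_tail_kernel[OF m Qm l_pos l_out kI] by simp_all
  have "\<forall>\<^sub>F u in at_top. (\<integral>y. y$k * ?h u y \<partial>lborel) / (\<integral>y. ?h u y \<partial>lborel) =
      u * (cond_mean M X k c u - c $ k * u)"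
    using h_pos eventually_gt_at_top[of 0]
    by eventually_elim
      (rule cond_mean_eq_tail_kernel_ratio[OF assms(1,5) Q_pd(1) Qct l_out ctI kI _ int, symmetric])
  with ratio have "((\<lambda>u. u * (cond_mean M X k c u - c $ k * u)) \<longlongrightarrow> 1 / ?l$k) at_top"
    by (rule tendsto_cong[THEN iffD1, rotated])
  then show ?thesis using l_pos[OF kI] by (simp add: sum_mult_sub_inv_eq_lagrange_vec[OF pd kI])
qed

end
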